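(* For every positive integer $t$ and every finite graph $G$ admitting a vertex cover of size at most $t$, the hypergraph of balls in $G$ has a proper sample compression scheme of size $t+4$.
   Context: A vertex cover of $G$ is a set $R\subseteq V(G)$ meeting every edge. A hypergraph $H$ is a pair $(V(H),E(H))$ with $V(H)$ finite and $E(H)\subseteq 2^{V(H)}$. A sample of $H$ is a pair $(X^+,X^-)$ of subsets of $V(H)$ such that some $e\in E(H)$ has $X^+\subseteq e$, $X^-\cap e=\emptyset$; $\mathcal{S}(H)$ is the set of samples. $S$ realizes $(X^+,X^-)$ if $X^+\subseteq S$, $S\cap X^-=\emptyset$. A subsample of $(X^+,X^-)$ is a sample $(Y^+,Y^-)$ with $Y^\pm\subseteq X^\pm$, of size $|Y^+\cup Y^-|$. A sample compression scheme is a pair $(\kappa,\rho)$ with $\kappa:\mathcal{S}(H)\to\mathcal{S}(H)\times\{0,1\}^*$, $\rho:\mathcal{S}(H)\times\{0,1\}^*\to 2^{V(H)}$, such that for every sample the first component of $\kappa(X^+,X^-)$ is a subsample of it and $\rho(\kappa(X^+,X^-))$ realizes it; its size is $k_1+k_2$ with $k_1$ the maximum size of the subsample and $k_2$ the maximum bitstring length output by $\kappa$; it is proper if every value of $\rho$ is a hyperedge. The hypergraph of balls in $G$ has vertex set $V(G)$ and hyperedges all $B_G(c,r)=\{v:\mathrm{dist}_G(c,v)\le r\}$ for $c\in V(G)$, $r$ an integer. *)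

theory Defs
  imports Main "HOL-Library.Extended_Nat"
begin

definition graph :: "'a set \<Rightarrow> ('a \<times> 'a) set \<Rightarrow> bool" where
  "graph V Ed \<longleftrightarrow> Ed \<subseteq> V \<times> V \<and> sym Ed \<and> irrefl Ed"

definition vertex_cover :: "'a set \<Rightarrow> ('a \<times> 'a) set \<Rightarrow> 'a set \<Rightarrow> bool" where
  "vertex_cover V Ed R \<longleftrightarrow> R \<subseteq> V \<and> (\<forall>(u,v)\<in>Ed. u \<in> R \<or> v \<in> R)"

text \<open>Graph distance (infinite if no path): least n such that v is reachable from u in n steps.\<close>
definition gdist :: "('a \<times> 'a) set \<Rightarrow> 'a \<Rightarrow> 'a \<Rightarrow> enat" where
  "gdist Ed u v = (INF n \<in> {n. (u, v) \<in> Ed ^^ n}. enat n)"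

definition ball :: "'a set \<Rightarrow> ('a \<times> 'a) set \<Rightarrow> 'a \<Rightarrow> int \<Rightarrow> 'a set" where
  "ball V Ed c r = {v \<in> V. r \<ge> 0 \<and> gdist Ed c v \<le> enat (nat r)}"

definition ball_edges :: "'a set \<Rightarrow> ('a \<times> 'a) set \<Rightarrow> 'a set set" where
  "ball_edges V Ed = {ball V Ed c r | c r. c \<in> V}"

definition samples :: "'a set \<Rightarrow> 'a set set \<Rightarrow> ('a set \<times> 'a set) set" where
  "samples VH EH = {(Xp, Xm). Xp \<subseteq> VH \<and> Xm \<subseteq> VH \<and>
      (\<exists>e\<in>EH. Xp \<subseteq> e \<and> Xm \<inter> e = {})}"

definition realizes :: "'a set \<Rightarrow> 'a set \<times> 'a set \<Rightarrow> bool" where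
  "realizes S X \<longleftrightarrow> fst X \<subseteq> S \<and> S \<inter> snd X = {}"

definition subsample :: "'a set \<Rightarrow> 'a set set \<Rightarrow> 'a set \<times> 'a set \<Rightarrow> 'a set \<times> 'a set \<Rightarrow> bool" where
  "subsample VH EH Y X \<longleftrightarrow> Y \<in> samples VH EH \<and> fst Y \<subseteq> fst X \<and> snd Y \<subseteq> snd X"

definition sample_size :: "'a set \<times> 'a set \<Rightarrow> nat" where
  "sample_size Y = card (fst Y \<union> snd Y)"

definition compression_scheme ::
  "'a set \<Rightarrow> 'a set set \<Rightarrow> ('a set \<times> 'a set \<Rightarrow> ('a set \<times> 'a set) \<times> bool list)
     \<Rightarrow> (('a set \<times> 'a set) \<times> bool list \<Rightarrow> 'a set) \<Rightarrow> nat \<Rightarrow> bool" where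
  "compression_scheme VH EH \<kappa> \<rho> k \<longleftrightarrow>
     (\<forall>X\<in>samples VH EH. subsample VH EH (fst (\<kappa> X)) X \<and> realizes (\<rho> (\<kappa> X)) X
        \<and> \<rho> (\<kappa> X) \<subseteq> VH) \<and>
     (\<exists>k1 k2. k1 + k2 \<le> k \<and>
        (\<forall>X\<in>samples VH EH. sample_size (fst (\<kappa> X)) \<le> k1 \<and> length (snd (\<kappa> X)) \<le> k2))"

definition proper_scheme ::
  "'a set \<Rightarrow> 'a set set \<Rightarrow> ('a set \<times> 'a set \<Rightarrow> ('a set \<times> 'a set) \<times> bool list)
     \<Rightarrow> (('a set \<times> 'a set) \<times> bool list \<Rightarrow> 'a set) \<Rightarrow> bool" where
  "proper_scheme VH EH \<kappa> \<rho> \<longleftrightarrow> (\<forall>Y\<in>samples VH EH. \<forall>w. \<rho> (Y, w) \<in> EH)"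

end

theory Submission
  imports Defs
begin

text \<open>Fix a vertex cover R and let the sample (P, M) be realized by the ball B(c, r); let x be a
  positive example farthest from c. If c lies in R, the subsample {x} together with c, written as
  a subset of R, recovers B(c, d(c, x)). Otherwise all neighbours of c lie in R, so the
  neighbourhood N(c) can be written down as a subset of R instead. Vertices with the same
  neighbourhood (twins) have the same balls of every radius at least 2, so for r \<ge> 2 the least
  twin of c and x recover the ball of radius max 2 d(c, x). For r = 1 the ball is N(c) plus its
  centre, and a twin of c outside M, singled out by one negative example, serves as centre. The
  remaining cases (r = 0, c isolated, r = 1 with c in P) are balls around the kept positive
  example. Three tag bits tell the cases apart, so one example and |R| + 3 bits suffice.\<close>

lemma gdist_le_enat_iff: "gdist Ed u v \<le> enat n \<longleftrightarrow> (\<exists>k\<le>n. (u, v) \<in> Ed ^^ k)"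
proof -
  have "gdist Ed u v \<le> enat n \<longleftrightarrow> gdist Ed u v < enat (Suc n)"
    by (cases "gdist Ed u v") auto
  then show ?thesis
    unfolding gdist_def INF_less_iff by (auto simp: less_Suc_eq_le)
qed

lemma gdist_refl [simp]: "gdist Ed u u = 0"
  using gdist_le_enat_iff[of Ed u u 0] by (simp flip: zero_enat_def)

lemma mem_ball_iff: "v \<in> ball V Ed c r \<longleftrightarrow> v \<in> V \<and> 0 \<le> r \<and> gdist Ed c v \<le> enat (nat r)"
  unfolding ball_def by auto

lemma ball_mono: "r \<le> r' \<Longrightarrow> ball V Ed c r \<subseteq> ball V Ed c r'"
  unfolding ball_def by auto (meson dual_order.trans enat_ord_simps(1) nat_mono)

lemma ball_negative: "r < 0 \<Longrightarrow> ball V Ed c r = {}"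
  unfolding ball_def by auto

lemma ball_subset_V: "ball V Ed c r \<subseteq> V"
  unfolding ball_def by blast

lemma center_mem_ball: "c \<in> V \<Longrightarrow> 0 \<le> r \<Longrightarrow> c \<in> ball V Ed c r"
  by (simp add: mem_ball_iff)

lemma ball_subset_center:
  assumes "r \<le> 0 \<or> Ed `` {c} = {}"
  shows "ball V Ed c r \<subseteq> {c}"
proof
  fix v assume "v \<in> ball V Ed c r"
  then obtain k where k: "k \<le> nat r" "(c, v) \<in> Ed ^^ k" "0 \<le> r"
    unfolding mem_ball_iff gdist_le_enat_iff by blast
  show "v \<in> {c}"
  proof (cases k)
    case (Suc m)
    with k(2) have "(c, v) \<in> Ed ^^ Suc m" by (simp only:)
    then obtain w where "(c, w) \<in> Ed" by (rule relpow_Suc_E2)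
    then have False using assms k(1,3) Suc by auto
    then show ?thesis ..
  qed (use k(2) in simp)
qed

lemma ball_one: "ball V Ed c 1 = V \<inter> insert c (Ed `` {c})"
proof -
  have "(\<exists>k\<le>1. (c, v) \<in> Ed ^^ k) \<longleftrightarrow> v = c \<or> (c, v) \<in> Ed" for v
    by (auto simp: le_Suc_eq)
  then show ?thesis by (auto simp: mem_ball_iff gdist_le_enat_iff)
qed

lemma same_neighbours_relpow:
  assumes "Ed `` {c} = Ed `` {c'}" "v \<noteq> c" "(c, v) \<in> Ed ^^ n"
  shows "(c', v) \<in> Ed ^^ n"
proof (cases n)
  case (Suc m)
  with assms(3) have "(c, v) \<in> Ed ^^ Suc m" by (simp only:)
  then obtain w where "(c, w) \<in> Ed" "(w, v) \<in> Ed ^^ m" by (rule relpow_Suc_E2)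
  moreover from \<open>(c, w) \<in> Ed\<close> have "(c', w) \<in> Ed" by (metis Image_singleton_iff assms(1))
  ultimately show ?thesis unfolding Suc by (blast intro: relpow_Suc_I2)
qed (use assms in auto)

lemma same_neighbours_gdist:
  assumes "Ed `` {c} = Ed `` {c'}" "v \<noteq> c" "v \<noteq> c'"
  shows "gdist Ed c v = gdist Ed c' v"
proof -
  have "(c, v) \<in> Ed ^^ n \<longleftrightarrow> (c', v) \<in> Ed ^^ n" for n
    using same_neighbours_relpow[OF assms(1,2)]
      same_neighbours_relpow[OF assms(1)[symmetric] assms(3)]
    by blast
  then show ?thesis unfolding gdist_def by simp
qed

lemma same_neighbours_gdist_le_2:
  assumes "sym Ed" "Ed `` {c} = Ed `` {c'}" "Ed `` {c} \<noteq> {}"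
  shows "gdist Ed c c' \<le> 2"
proof -
  obtain w where cw: "(c, w) \<in> Ed" using assms(3) by blast
  then have "(c', w) \<in> Ed" by (metis Image_singleton_iff assms(2))
  with assms(1) have "(w, c') \<in> Ed" by (rule symD)
  then have "(w, c') \<in> Ed ^^ Suc 0" by simp
  then have "(c, c') \<in> Ed ^^ 2" using relpow_Suc_I2[OF cw] by (simp only: numeral_2_eq_2)
  then have "gdist Ed c c' \<le> enat 2" unfolding gdist_le_enat_iff by (blast intro: order_refl)
  then show ?thesis by (simp only: numeral_eq_enat)
qed

lemma same_neighbours_max_2_gdist:
  assumes "sym Ed" "Ed `` {c} = Ed `` {c'}" "Ed `` {c} \<noteq> {}"
  shows "max 2 (gdist Ed c v) = max 2 (gdist Ed c' v)"
proof -
  have "gdist Ed c c' \<le> 2" using same_neighbours_gdist_le_2[OF assms] .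
  have "gdist Ed c' c \<le> 2"
    using same_neighbours_gdist_le_2[OF assms(1) assms(2)[symmetric]] assms(2,3) by simp
  consider "v = c" | "v = c'" | "v \<noteq> c" "v \<noteq> c'" by blast
  then show ?thesis
  proof cases
    case 1
    then show ?thesis using \<open>gdist Ed c' c \<le> 2\<close> by (simp add: max_def)
  next
    case 2
    then show ?thesis using \<open>gdist Ed c c' \<le> 2\<close> by (simp add: max_def)
  next
    case 3
    then show ?thesis using same_neighbours_gdist[OF assms(2)] by simp
  qed
qed

lemma same_neighbours_ball:
  assumes "sym Ed" "Ed `` {c} = Ed `` {c'}" "Ed `` {c} \<noteq> {}" "2 \<le> r"
  shows "ball V Ed c r = ball V Ed c' r"
proof -
  have "2 \<le> enat (nat r)" using assms(4) by (simp add: numeral_eq_enat)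
  then have "gdist Ed c v \<le> enat (nat r) \<longleftrightarrow> gdist Ed c' v \<le> enat (nat r)" for v
    using same_neighbours_max_2_gdist[OF assms(1-3), of v] by (metis max.bounded_iff)
  then show ?thesis unfolding ball_def by blast
qed

lemma farthest_point:
  assumes "finite P" "P \<noteq> {}" "P \<subseteq> ball V Ed c r"
  obtains x n where "x \<in> P" "gdist Ed c x = enat n" "int n \<le> r" "P \<subseteq> ball V Ed c (int n)"
proof -
  have "Max (gdist Ed c ` P) \<in> gdist Ed c ` P" using assms(1,2) by (intro Max_in) auto
  then obtain x where x: "x \<in> P" "gdist Ed c x = Max (gdist Ed c ` P)" by auto
  have far: "\<forall>y\<in>P. gdist Ed c y \<le> gdist Ed c x" unfolding x(2) using assms(1) by simp
  have "gdist Ed c x \<le> enat (nat r)" "0 \<le> r" using x assms(3) by (auto simp: mem_ball_iff)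
  then obtain n where n: "gdist Ed c x = enat n" "n \<le> nat r" by (cases "gdist Ed c x") auto
  have "P \<subseteq> ball V Ed c (int n)" using far n assms(3) by (auto simp: mem_ball_iff)
  moreover have "int n \<le> r" using n(2) \<open>0 \<le> r\<close> by (simp add: le_nat_iff)
  ultimately show ?thesis using that x(1) n(1) by blast
qed

lemma realizes_iff: "realizes S (P, M) \<longleftrightarrow> P \<subseteq> S \<and> S \<inter> M = {}"
  unfolding realizes_def by simp

lemma realizes_between: "P \<subseteq> S \<Longrightarrow> S \<subseteq> B \<Longrightarrow> B \<inter> M = {} \<Longrightarrow> realizes S (P, M)"
  unfolding realizes_iff by blast

lemma samples_downward_closed:
  assumes "X \<in> samples VH EH" "fst Y \<subseteq> fst X" "snd Y \<subseteq> snd X"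
  shows "Y \<in> samples VH EH"
proof -
  obtain P M where X: "X = (P, M)" by (cases X)
  obtain P' M' where Y: "Y = (P', M')" by (cases Y)
  from assms(1) obtain e where "e \<in> EH" "P \<subseteq> e" "M \<inter> e = {}" "P \<subseteq> VH" "M \<subseteq> VH"
    unfolding X samples_def by blast
  moreover have "P' \<subseteq> e" "M' \<inter> e = {}" "P' \<subseteq> VH" "M' \<subseteq> VH"
    using calculation assms(2,3) unfolding X Y by auto
  ultimately show ?thesis unfolding Y samples_def by blast
qed

definition compressible ::
  "(('a set \<times> 'a set) \<times> bool list \<Rightarrow> 'a set) \<Rightarrow> nat \<Rightarrow> nat \<Rightarrow> 'a set \<times> 'a set \<Rightarrow> bool" where
  "compressible \<rho> k1 k2 X \<longleftrightarrow> (\<exists>Y w. fst Y \<subseteq> fst X \<and> snd Y \<subseteq> snd X \<and>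
     sample_size Y \<le> k1 \<and> length w \<le> k2 \<and> realizes (\<rho> (Y, w)) X)"

lemma compressibleI:
  "Yp \<subseteq> P \<Longrightarrow> Ym \<subseteq> M \<Longrightarrow> card (Yp \<union> Ym) \<le> k1 \<Longrightarrow> length w \<le> k2 \<Longrightarrow>
    realizes (\<rho> ((Yp, Ym), w)) (P, M) \<Longrightarrow> compressible \<rho> k1 k2 (P, M)"
  unfolding compressible_def sample_size_def by (intro exI[of _ "(Yp, Ym)"] exI[of _ w]) simp

lemma proper_compression_scheme_if_compressible:
  assumes "EH \<subseteq> Pow VH" "k1 + k2 \<le> k"
    and proper: "\<forall>Y\<in>samples VH EH. \<forall>w. \<rho> (Y, w) \<in> EH"
    and compressible: "\<forall>X\<in>samples VH EH. compressible \<rho> k1 k2 X"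
  shows "\<exists>\<kappa>. compression_scheme VH EH \<kappa> \<rho> k \<and> proper_scheme VH EH \<kappa> \<rho>"
proof -
  define good where "good X Yw \<longleftrightarrow> fst (fst Yw) \<subseteq> fst X \<and> snd (fst Yw) \<subseteq> snd X \<and>
     sample_size (fst Yw) \<le> k1 \<and> length (snd Yw) \<le> k2 \<and> realizes (\<rho> Yw) X" for X Yw
  define \<kappa> where "\<kappa> X = (SOME Yw. good X Yw)" for X
  have good: "good X (\<kappa> X)" if "X \<in> samples VH EH" for X
  proof -
    from compressible that have "compressible \<rho> k1 k2 X" by blast
    then obtain Y w where "fst Y \<subseteq> fst X" "snd Y \<subseteq> snd X" "sample_size Y \<le> k1"
      "length w \<le> k2" "realizes (\<rho> (Y, w)) X"
      unfolding compressible_def by blast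
    then have "good X (Y, w)" unfolding good_def by simp
    then show ?thesis unfolding \<kappa>_def by (rule someI)
  qed
  have subsample: "subsample VH EH (fst (\<kappa> X)) X" if "X \<in> samples VH EH" for X
    using good[OF that] samples_downward_closed[OF that] unfolding subsample_def good_def by blast
  have "\<rho> (\<kappa> X) \<in> EH" if "X \<in> samples VH EH" for X
    using proper subsample[OF that] unfolding subsample_def by (metis prod.collapse)
  then have "compression_scheme VH EH \<kappa> \<rho> k"
    unfolding compression_scheme_def using assms(1,2) subsample good
    by (intro conjI ballI exI[of _ k1] exI[of _ k2]) (auto simp: good_def)
  then show ?thesis using proper unfolding proper_scheme_def by blast
qed

locale ball_compression =
  fixes V :: "'a set" and Ed :: "('a \<times> 'a) set" and Rl :: "'a list" and g :: "'a \<Rightarrow> nat"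
  assumes finite_V: "finite V" and graph: "graph V Ed"
    and cover: "vertex_cover V Ed (set Rl)" and inj_g: "inj_on g V"
begin

definition least :: "'a set \<Rightarrow> 'a" where
  "least S = arg_min g (\<lambda>v. v \<in> S)"

lemma least_mem_minimal: "v \<in> S \<Longrightarrow> least S \<in> S \<and> (\<forall>u\<in>S. g (least S) \<le> g u)"
  unfolding least_def using arg_min_nat_lemma[of "\<lambda>v. v \<in> S" v g] by blast

lemma least_singleton [simp]: "least {v} = v"
  using least_mem_minimal[of v "{v}"] by blast

lemma least_eqI: "S \<subseteq> V \<Longrightarrow> s \<in> S \<Longrightarrow> \<forall>u\<in>S. g s \<le> g u \<Longrightarrow> least S = s"
  using least_mem_minimal[of s S] inj_g by (metis antisym inj_onD subsetD)

text \<open>Which element of C avoiding M is meant can be conveyed by a single negative example: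
  the largest element of C below the least one avoiding M.\<close>
lemma least_above_one_negative:
  assumes "C \<subseteq> V" "c \<in> C" "c \<notin> M"
  obtains Q where "Q \<subseteq> M" "card Q \<le> 1" "least {v \<in> C. \<forall>z\<in>Q. g z < g v} \<in> C - M"
proof -
  define s where "s = least (C - M)"
  have s: "s \<in> C - M" "\<forall>u\<in>C - M. g s \<le> g u"
    using least_mem_minimal[of c "C - M"] assms unfolding s_def by auto
  define B where "B = {v \<in> C. g v < g s}"
  have "B \<subseteq> M"
  proof
    fix v assume "v \<in> B"
    show "v \<in> M"
    proof (rule ccontr)
      assume "v \<notin> M"
      then have "g s \<le> g v" using s(2) \<open>v \<in> B\<close> unfolding B_def by blast
      then show False using \<open>v \<in> B\<close> unfolding B_def by simp
    qed
  qed
  obtain Q where Q: "Q \<subseteq> B" "card Q \<le> 1" "\<forall>v\<in>C. (\<forall>z\<in>Q. g z < g v) \<longrightarrow> g s \<le> g v"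
    "\<forall>z\<in>Q. g z < g s"
  proof (cases "B = {}")
    case True
    then have "\<forall>v\<in>C. g s \<le> g v" unfolding B_def using leI by blast
    then show ?thesis by (intro that[of "{}"]) auto
  next
    case False
    then obtain p where p: "p \<in> B" "\<forall>v\<in>B. g v \<le> g p"
      using Lattices_Big.ex_has_greatest_nat[of "\<lambda>v. v \<in> B" _ g "g s"] unfolding B_def by blast
    have above_p: "g s \<le> g v" if "v \<in> C" "g p < g v" for v
    proof (rule ccontr)
      assume "\<not> g s \<le> g v"
      then have "v \<in> B" unfolding B_def using that(1) by simp
      then show False using p(2) that(2) by fastforce
    qed
    show ?thesis using p(1) above_p by (intro that[of "{p}"]) (auto simp: B_def)
  qed
  have "least {v \<in> C. \<forall>z\<in>Q. g z < g v} = s"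
    using Q s assms(1) by (intro least_eqI) auto
  then show ?thesis using that Q \<open>B \<subseteq> M\<close> s by blast
qed

definition enc :: "'a set \<Rightarrow> bool list" where
  "enc A = map (\<lambda>u. u \<in> A) Rl"

definition dec :: "bool list \<Rightarrow> 'a set" where
  "dec w = {u. (u, True) \<in> set (zip Rl w)}"

lemma dec_enc [simp]: "dec (enc A) = A \<inter> set Rl"
  unfolding dec_def enc_def zip_map2 zip_same_conv_map by auto

lemma length_enc [simp]: "length (enc A) = length Rl"
  unfolding enc_def by simp

definition twin_class :: "'a set \<Rightarrow> 'a set" where
  "twin_class N = {v \<in> V. Ed `` {v} = N}"

text \<open>A three-bit tag selects how centre and radius are recovered; the remaining bits encode
  a subset A of the vertex cover: the centre itself, or the common neighbourhood of its twin class.\<close>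
definition decode :: "'a set \<times> 'a set \<Rightarrow> bool list \<Rightarrow> 'a \<times> int" where
  "decode Y w = (let x = (SOME x. x \<in> fst Y); A = dec (drop 3 w) in
     if take 3 w = [False, False, True] then (x, 0)
     else if take 3 w = [False, True, False] then (x, 1)
     else if take 3 w = [False, True, True] then
       (least A, int (the_enat (gdist Ed (least A) x)))
     else if take 3 w = [True, False, False] then
       (least (twin_class A), int (the_enat (max 2 (gdist Ed (least (twin_class A)) x))))
     else if take 3 w = [True, False, True] then
       (least {v \<in> twin_class A. \<forall>z\<in>snd Y. g z < g v}, 1)
     else (x, -1))"

text \<open>A centre outside V can only arise as the junk value of least on an empty set.\<close>
definition reconstruct :: "('a set \<times> 'a set) \<times> bool list \<Rightarrow> 'a set" where
  "reconstruct Yw = (case decode (fst Yw) (snd Yw) of (c, r) \<Rightarrow> if c \<in> V then ball V Ed c r else {})"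

lemma reconstruct_eq_ball: "decode Y w = (c, r) \<Longrightarrow> c \<in> V \<Longrightarrow> reconstruct (Y, w) = ball V Ed c r"
  unfolding reconstruct_def by simp

lemma reconstruct_in_ball_edges:
  assumes "V \<noteq> {}" shows "reconstruct Yw \<in> ball_edges V Ed"
proof -
  obtain v where "v \<in> V" using assms by auto
  then have "{} \<in> ball_edges V Ed" unfolding ball_edges_def using ball_negative[of "-1"] by force
  then show ?thesis unfolding reconstruct_def ball_edges_def by (auto split: prod.split)
qed

abbreviation compressible_sample :: "'a set \<times> 'a set \<Rightarrow> bool" where
  "compressible_sample X \<equiv> compressible reconstruct 1 (length Rl + 3) X"

lemma compressible_no_positive: "compressible_sample ({}, M)"
proof -
  have "decode ({}, {}) [] = (SOME x. x \<in> {}, -1)" unfolding decode_def by (simp add: Let_def)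
  then have "reconstruct (({}, {}), []) = {}"
    unfolding reconstruct_def by (simp add: ball_negative)
  then show ?thesis
    by (intro compressibleI[where Yp = "{}" and Ym = "{}" and w = "[]"]) (auto simp: realizes_iff)
qed

lemma neighbours_subset_cover: "c \<notin> set Rl \<Longrightarrow> Ed `` {c} \<subseteq> set Rl"
  using cover unfolding vertex_cover_def by blast

lemma compressible_center_in_cover:
  assumes "c \<in> set Rl" "P \<noteq> {}" "P \<subseteq> ball V Ed c r" "ball V Ed c r \<inter> M = {}"
  shows "compressible_sample (P, M)"
proof -
  have "finite P" using assms(3) ball_subset_V finite_V by (metis finite_subset)
  then obtain x n where x: "x \<in> P" "gdist Ed c x = enat n" "int n \<le> r" "P \<subseteq> ball V Ed c (int n)"
    using farthest_point assms(2,3) by metis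
  let ?w = "[False, True, True] @ enc {c}"
  have "decode ({x}, {}) ?w = (c, int n)"
    unfolding decode_def using assms(1) x(2) by (simp add: Let_def)
  moreover have "c \<in> V" using assms(1) cover unfolding vertex_cover_def by blast
  ultimately have "reconstruct (({x}, {}), ?w) = ball V Ed c (int n)"
    by (rule reconstruct_eq_ball)
  moreover have "realizes (ball V Ed c (int n)) (P, M)"
    using x(4) ball_mono[OF x(3)] assms(4) by (rule realizes_between)
  ultimately show ?thesis
    using x(1) by (intro compressibleI[where Yp = "{x}" and Ym = "{}" and w = ?w]) auto
qed

lemma compressible_center_only:
  assumes "r \<le> 0 \<or> Ed `` {c} = {}" "c \<in> V"
    and "P \<noteq> {}" "P \<subseteq> ball V Ed c r" "ball V Ed c r \<inter> M = {}"
  shows "compressible_sample (P, M)"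
proof -
  have P: "P = {c}" using ball_subset_center[OF assms(1)] assms(3,4) by blast
  then have "0 \<le> r" using assms(4) by (auto simp: mem_ball_iff)
  have "decode ({c}, {}) [False, False, True] = (c, 0)" unfolding decode_def by (simp add: Let_def)
  then have "reconstruct (({c}, {}), [False, False, True]) = ball V Ed c 0"
    using assms(2) by (rule reconstruct_eq_ball)
  moreover have "P \<subseteq> ball V Ed c 0" using P center_mem_ball[OF assms(2), of 0] by simp
  then have "realizes (ball V Ed c 0) (P, M)"
    using ball_mono[OF \<open>0 \<le> r\<close>] assms(5) by (rule realizes_between)
  ultimately show ?thesis
    using P
    by (intro compressibleI[where Yp = "{c}" and Ym = "{}" and w = "[False, False, True]"]) auto
qed

lemma compressible_center_radius_1:
  assumes "c \<in> P" "c \<in> V" "P \<subseteq> ball V Ed c 1" "ball V Ed c 1 \<inter> M = {}"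
  shows "compressible_sample (P, M)"
proof -
  have "decode ({c}, {}) [False, True, False] = (c, 1)" unfolding decode_def by (simp add: Let_def)
  then have "reconstruct (({c}, {}), [False, True, False]) = ball V Ed c 1"
    using assms(2) by (rule reconstruct_eq_ball)
  moreover have "realizes (ball V Ed c 1) (P, M)"
    using assms(3) subset_refl assms(4) by (rule realizes_between)
  ultimately show ?thesis
    using assms(1)
    by (intro compressibleI[where Yp = "{c}" and Ym = "{}" and w = "[False, True, False]"]) auto
qed

text \<open>A ball of radius 1 around c is N(c) plus c, so if c is not a positive example any twin
  of c that is not a negative example serves as centre instead.\<close>
lemma compressible_twin_radius_1:
  assumes "c \<notin> set Rl" "c \<notin> P" "c \<in> V" "P \<subseteq> ball V Ed c 1" "ball V Ed c 1 \<inter> M = {}"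
  shows "compressible_sample (P, M)"
proof -
  define N where "N = Ed `` {c}"
  have C: "twin_class N \<subseteq> V" "c \<in> twin_class N"
    using assms(3) unfolding twin_class_def N_def by auto
  have "c \<notin> M" using center_mem_ball[OF assms(3), of 1] assms(5) by auto
  then obtain Q where Q: "Q \<subseteq> M" "card Q \<le> 1"
    and c': "least {v \<in> twin_class N. \<forall>z\<in>Q. g z < g v} \<in> twin_class N - M"
    using least_above_one_negative[OF C] by blast
  define c' where "c' = least {v \<in> twin_class N. \<forall>z\<in>Q. g z < g v}"
  have "c' \<in> V" "Ed `` {c'} = N" "c' \<notin> M" using c' unfolding c'_def twin_class_def by auto
  let ?w = "[True, False, True] @ enc N"
  have "N \<subseteq> set Rl" unfolding N_def using neighbours_subset_cover[OF assms(1)] .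
  then have "decode ({}, Q) ?w = (c', 1)"
    unfolding decode_def by (simp add: Let_def Int_absorb2 flip: c'_def)
  then have "reconstruct (({}, Q), ?w) = ball V Ed c' 1"
    using \<open>c' \<in> V\<close> by (rule reconstruct_eq_ball)
  also have "\<dots> = V \<inter> insert c' N" using \<open>Ed `` {c'} = N\<close> by (simp add: ball_one)
  finally have rec: "reconstruct (({}, Q), ?w) = V \<inter> insert c' N" .
  have ball_c: "ball V Ed c 1 = V \<inter> insert c N" unfolding N_def by (rule ball_one)
  have "P \<subseteq> V \<inter> N" using assms(2,4) unfolding ball_c by blast
  moreover have "V \<inter> N \<inter> M = {}" using assms(5) unfolding ball_c by blast
  ultimately have "realizes (V \<inter> insert c' N) (P, M)"
    using \<open>c' \<notin> M\<close> unfolding realizes_iff by blast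
  then show ?thesis
    using Q rec by (intro compressibleI[where Yp = "{}" and Ym = Q and w = ?w]) auto
qed

lemma compressible_twin_far:
  assumes "c \<notin> set Rl" "c \<in> V" "Ed `` {c} \<noteq> {}" "2 \<le> r"
    and "P \<noteq> {}" "P \<subseteq> ball V Ed c r" "ball V Ed c r \<inter> M = {}"
  shows "compressible_sample (P, M)"
proof -
  have "finite P" using assms(6) ball_subset_V finite_V by (metis finite_subset)
  then obtain x n where x: "x \<in> P" "gdist Ed c x = enat n" "int n \<le> r" "P \<subseteq> ball V Ed c (int n)"
    using farthest_point assms(5,6) by metis
  define N where "N = Ed `` {c}"
  define c' where "c' = least (twin_class N)"
  have "c \<in> twin_class N" using assms(2) unfolding twin_class_def N_def by auto
  then have "c' \<in> twin_class N" unfolding c'_def using least_mem_minimal by blast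
  then have "c' \<in> V" and twins: "Ed `` {c} = Ed `` {c'}" unfolding twin_class_def N_def by auto
  have sym: "sym Ed" using graph unfolding graph_def by blast
  have max_2: "max 2 (gdist Ed c' x) = enat (max 2 n)"
    using same_neighbours_max_2_gdist[OF sym twins assms(3), of x] x(2)
    by (simp add: numeral_eq_enat)
  define \<rho> where "\<rho> = int (max 2 n)"
  let ?w = "[True, False, False] @ enc N"
  have "N \<subseteq> set Rl" unfolding N_def using neighbours_subset_cover[OF assms(1)] .
  then have "decode ({x}, {}) ?w = (c', \<rho>)"
    unfolding decode_def \<rho>_def by (simp add: Let_def Int_absorb2 max_2 flip: c'_def)
  then have "reconstruct (({x}, {}), ?w) = ball V Ed c' \<rho>"
    using \<open>c' \<in> V\<close> by (rule reconstruct_eq_ball)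
  also have "\<dots> = ball V Ed c \<rho>"
    using same_neighbours_ball[OF sym twins assms(3)] unfolding \<rho>_def by simp
  finally have rec: "reconstruct (({x}, {}), ?w) = ball V Ed c \<rho>" .
  have "int n \<le> \<rho>" "\<rho> \<le> r" using x(3) assms(4) unfolding \<rho>_def by auto
  have "P \<subseteq> ball V Ed c \<rho>" using x(4) ball_mono[OF \<open>int n \<le> \<rho>\<close>] by (rule order.trans)
  then have "realizes (ball V Ed c \<rho>) (P, M)"
    using ball_mono[OF \<open>\<rho> \<le> r\<close>] assms(7) by (rule realizes_between)
  then show ?thesis
    using x(1) rec by (intro compressibleI[where Yp = "{x}" and Ym = "{}" and w = ?w]) auto
qed

lemma compressible_every_sample:
  assumes "X \<in> samples V (ball_edges V Ed)"
  shows "compressible_sample X"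
proof -
  obtain P M where X: "X = (P, M)" by (cases X)
  from assms obtain c r where c: "c \<in> V"
    and P: "P \<subseteq> ball V Ed c r" and M: "ball V Ed c r \<inter> M = {}"
    unfolding samples_def ball_edges_def X by blast
  have "r \<le> 0 \<or> r = 1 \<or> 2 \<le> r" by linarith
  then consider "P = {}" | "c \<in> set Rl" "P \<noteq> {}" | "r \<le> 0 \<or> Ed `` {c} = {}" "P \<noteq> {}"
    | "r = 1" "c \<in> P" | "r = 1" "c \<notin> P" "c \<notin> set Rl"
    | "2 \<le> r" "Ed `` {c} \<noteq> {}" "c \<notin> set Rl" "P \<noteq> {}"
    by blast
  then have "compressible_sample (P, M)"
  proof cases
    case 1
    then show ?thesis using compressible_no_positive by simp
  next
    case 2
    then show ?thesis using P M by (rule compressible_center_in_cover)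
  next
    case 3
    show ?thesis using 3(1) c 3(2) P M by (rule compressible_center_only)
  next
    case 4
    then have "P \<subseteq> ball V Ed c 1" "ball V Ed c 1 \<inter> M = {}" using P M by simp_all
    with 4(2) c show ?thesis by (intro compressible_center_radius_1)
  next
    case 5
    then have "P \<subseteq> ball V Ed c 1" "ball V Ed c 1 \<inter> M = {}" using P M by simp_all
    with 5(3,2) c show ?thesis by (intro compressible_twin_radius_1)
  next
    case 6
    show ?thesis using 6(3) c 6(2,1,4) P M by (rule compressible_twin_far)
  qed
  then show ?thesis unfolding X .
qed

end

theorem theorem1p3:
  fixes V :: "'a set" and Ed :: "('a \<times> 'a) set" and t :: nat
  assumes "t \<ge> 1" and "finite V" and "graph V Ed"
    and "\<exists>R. vertex_cover V Ed R \<and> card R \<le> t"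
  shows "\<exists>\<kappa> \<rho>. compression_scheme V (ball_edges V Ed) \<kappa> \<rho> (t + 4)
           \<and> proper_scheme V (ball_edges V Ed) \<kappa> \<rho>"
proof -
  obtain R where R: "vertex_cover V Ed R" "card R \<le> t" using assms(4) by blast
  then have "finite R" using assms(2) unfolding vertex_cover_def by (metis finite_subset)
  then obtain Rl where Rl: "set Rl = R" "distinct Rl" using finite_distinct_list by blast
  obtain g :: "'a \<Rightarrow> nat" where "inj_on g V" using finite_imp_inj_to_nat_seg[OF assms(2)] by blast
  interpret ball_compression V Ed Rl g
    using assms(2,3) R(1) Rl(1) \<open>inj_on g V\<close> by unfold_locales simp_all
  have nonempty: "V \<noteq> {}" if "Y \<in> samples V (ball_edges V Ed)" for Y
    using that by (cases Y) (auto simp: samples_def ball_edges_def)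
  have "ball_edges V Ed \<subseteq> Pow V" unfolding ball_edges_def ball_def by blast
  moreover have "1 + (length Rl + 3) \<le> t + 4" using R(2) Rl(1) distinct_card[OF Rl(2)] by simp
  moreover have "\<forall>Y\<in>samples V (ball_edges V Ed). \<forall>w. reconstruct (Y, w) \<in> ball_edges V Ed"
    using nonempty reconstruct_in_ball_edges by blast
  moreover have "\<forall>X\<in>samples V (ball_edges V Ed). compressible_sample X"
    using compressible_every_sample by blast
  ultimately have "\<exists>\<kappa>. compression_scheme V (ball_edges V Ed) \<kappa> reconstruct (t + 4)
      \<and> proper_scheme V (ball_edges V Ed) \<kappa> reconstruct"
    by (rule proper_compression_scheme_if_compressible)
  then show ?thesis by blast
qed

end
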